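(* Let $(G,E)$ be a connected simple graph with countable vertex set, $\mu$ a conductance, and $d$ a metric on $G$. Assume (E($\beta$)): there is $r_0>0$ with $\mathbb{E}^x[\tau(x,r)]\asymp r^\beta$ for all $x\in G$ and $r>r_0$; and (VG($\alpha$)): $V_d(x,r)\le C(r/s)^\alpha V_d(x,s)$ for all $x$ and $r>s>0$. Then there exists $c>0$ such that $h_{2n}(x,x)\ge c/V_d(x,n^{1/\beta})$ for all $x\in G$ and $n\ge1$.
   Context: $\mu_x=\sum_{y\sim x}\mu_{xy}$, $V_d(x,r)=\sum_{y\in B_d(x,r)}\mu_y$. $(X_n)$ is the random walk with transition probabilities $p(x,y)=\mu_{xy}/\mu_x$, $\mathbb{P}^x,\mathbb{E}^x$ its law and expectation started at $x$, $p_n(x,y)=\mathbb{P}^x(X_n=y)$, $h_n(x,y)=p_n(x,y)/\mu_y$. $\tau(x,r)=\min\{n:X_n\notin B_d(x,r)\}$. *)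

theory Defs
  imports "HOL-Analysis.Analysis"
begin

definition simple_graph :: "('a \<Rightarrow> 'a \<Rightarrow> bool) \<Rightarrow> bool" where
  "simple_graph E \<longleftrightarrow> (\<forall>x y. E x y \<longrightarrow> E y x) \<and> (\<forall>x. \<not> E x x)"

definition connected_graph :: "('a \<Rightarrow> 'a \<Rightarrow> bool) \<Rightarrow> bool" where
  "connected_graph E \<longleftrightarrow> (\<forall>x y. E\<^sup>*\<^sup>* x y)"

definition conductance :: "('a \<Rightarrow> 'a \<Rightarrow> bool) \<Rightarrow> ('a \<Rightarrow> 'a \<Rightarrow> real) \<Rightarrow> bool" where
  "conductance E mu \<longleftrightarrow>
     (\<forall>x y. mu x y = mu y x) \<and> (\<forall>x y. E x y \<longrightarrow> mu x y > 0) \<and>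
     (\<forall>x y. \<not> E x y \<longrightarrow> mu x y = 0) \<and> (\<forall>x. (\<lambda>y. mu x y) summable_on {y. E x y})"

definition is_metric :: "('a \<Rightarrow> 'a \<Rightarrow> real) \<Rightarrow> bool" where
  "is_metric d \<longleftrightarrow> (\<forall>x y. d x y \<ge> 0) \<and> (\<forall>x y. d x y = 0 \<longleftrightarrow> x = y) \<and>
     (\<forall>x y. d x y = d y x) \<and> (\<forall>x y z. d x z \<le> d x y + d y z)"

definition vweight :: "('a \<Rightarrow> 'a \<Rightarrow> bool) \<Rightarrow> ('a \<Rightarrow> 'a \<Rightarrow> real) \<Rightarrow> 'a \<Rightarrow> real" where
  "vweight E mu x = (\<Sum>\<^sub>\<infinity>y\<in>{y. E x y}. mu x y)"

definition ptrans :: "('a \<Rightarrow> 'a \<Rightarrow> bool) \<Rightarrow> ('a \<Rightarrow> 'a \<Rightarrow> real) \<Rightarrow> 'a \<Rightarrow> 'a \<Rightarrow> real" where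
  "ptrans E mu x y = (if E x y then mu x y / vweight E mu x else 0)"

primrec pn :: "('a \<Rightarrow> 'a \<Rightarrow> bool) \<Rightarrow> ('a \<Rightarrow> 'a \<Rightarrow> real) \<Rightarrow> nat \<Rightarrow> 'a \<Rightarrow> 'a \<Rightarrow> real" where
  "pn E mu 0 x y = (if x = y then 1 else 0)"
| "pn E mu (Suc n) x y = (\<Sum>\<^sub>\<infinity>z. ptrans E mu x z * pn E mu n z y)"

definition hn :: "('a \<Rightarrow> 'a \<Rightarrow> bool) \<Rightarrow> ('a \<Rightarrow> 'a \<Rightarrow> real) \<Rightarrow> nat \<Rightarrow> 'a \<Rightarrow> 'a \<Rightarrow> real" where
  "hn E mu n x y = pn E mu n x y / vweight E mu y"

definition dball :: "('a \<Rightarrow> 'a \<Rightarrow> real) \<Rightarrow> 'a \<Rightarrow> real \<Rightarrow> 'a set" where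
  "dball d x r = {y. d x y < r}"

definition vol :: "('a \<Rightarrow> 'a \<Rightarrow> bool) \<Rightarrow> ('a \<Rightarrow> 'a \<Rightarrow> real) \<Rightarrow> ('a \<Rightarrow> 'a \<Rightarrow> real) \<Rightarrow> 'a \<Rightarrow> real \<Rightarrow> real" where
  "vol E mu d x r = (\<Sum>\<^sub>\<infinity>y\<in>dball d x r. vweight E mu y)"

text \<open>Killed kernel: qk B n x y = P^x(X_0,...,X_n \<in> B, X_n = y).\<close>
primrec qk :: "('a \<Rightarrow> 'a \<Rightarrow> bool) \<Rightarrow> ('a \<Rightarrow> 'a \<Rightarrow> real) \<Rightarrow> 'a set \<Rightarrow> nat \<Rightarrow> 'a \<Rightarrow> 'a \<Rightarrow> real" where
  "qk E mu B 0 x y = (if x = y \<and> x \<in> B then 1 else 0)"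
| "qk E mu B (Suc n) x y = (if y \<in> B then (\<Sum>\<^sub>\<infinity>z. qk E mu B n x z * ptrans E mu z y) else 0)"

text \<open>E^x[tau(x,r)] = sum_{n>=0} P^x(tau(x,r) > n), with tau(x,r) = min{n. X_n \<notin> B_d(x,r)};
  value in ennreal (may be infinite).\<close>
definition exit_time :: "('a \<Rightarrow> 'a \<Rightarrow> bool) \<Rightarrow> ('a \<Rightarrow> 'a \<Rightarrow> real) \<Rightarrow> ('a \<Rightarrow> 'a \<Rightarrow> real) \<Rightarrow> 'a \<Rightarrow> real \<Rightarrow> ennreal" where
  "exit_time E mu d x r = (\<Sum>n. ennreal (\<Sum>\<^sub>\<infinity>y. qk E mu (dball d x r) n x y))"

end

theory Submission
  imports Defs
begin

text \<open>Let \<open>B = B(x, R)\<close>. Since \<open>B \<subseteq> B(z, 2R)\<close> for \<open>z \<in> B\<close>, the Markov property at time \<open>n\<close> gives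
  \<open>E\<^sup>x[\<tau>\<^sub>B] \<le> n + P\<^sup>x(\<tau>\<^sub>B > n) sup\<^sub>z E\<^sup>z[\<tau>(z, 2R)]\<close>, so by E(\<open>\<beta>\<close>) the walk is still in \<open>B\<close> at time
  \<open>n\<close> with probability at least \<open>\<epsilon> > 0\<close> once \<open>R \<asymp> n\<^sup>1\<^sup>/\<^sup>\<beta>\<close>. Reversibility and Chapman-Kolmogorov give
  \<open>h\<^sub>2\<^sub>n(x,x) = \<Sum>\<^sub>y p\<^sub>n(x,y)\<^sup>2/\<mu>\<^sub>y\<close>, which by Cauchy-Schwarz is at least
  \<open>P\<^sup>x(X\<^sub>n \<in> B)\<^sup>2/V(x,R) \<ge> \<epsilon>\<^sup>2/V(x,R)\<close>; volume growth compares \<open>V(x,R)\<close> with \<open>V(x,n\<^sup>1\<^sup>/\<^sup>\<beta>)\<close>.\<close>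

section \<open>Nonnegative infinite sums in \<open>ennreal\<close>\<close>

lemma ennreal_summable_on [simp]: "(f :: 'b \<Rightarrow> ennreal) summable_on A"
  by (rule nonneg_summable_on_complete) simp

lemma infsum_cmult_left_ennreal:
  "(\<Sum>\<^sub>\<infinity>x\<in>A. c * f x) = c * (\<Sum>\<^sub>\<infinity>x\<in>A. (f x :: ennreal))"
proof -
  have "(\<Sum>\<^sub>\<infinity>x\<in>A. c * f x) = (SUP F\<in>{F. finite F \<and> F \<subseteq> A}. \<Sum>x\<in>F. c * f x)"
    by (rule nonneg_infsum_complete) simp
  also have "\<dots> = (SUP F\<in>{F. finite F \<and> F \<subseteq> A}. c * sum f F)"
    by (simp add: sum_distrib_left)
  also have "\<dots> = c * (SUP F\<in>{F. finite F \<and> F \<subseteq> A}. sum f F)"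
    by (rule SUP_mult_left_ennreal[symmetric])
  also have "\<dots> = c * (\<Sum>\<^sub>\<infinity>x\<in>A. f x)"
    by (subst nonneg_infsum_complete) simp_all
  finally show ?thesis .
qed

lemma infsum_cmult_right_ennreal:
  "(\<Sum>\<^sub>\<infinity>x\<in>A. f x * c) = (\<Sum>\<^sub>\<infinity>x\<in>A. (f x :: ennreal)) * c"
  using infsum_cmult_left_ennreal[of c f A] by (simp add: mult.commute)

lemma infsum_mono_ennreal:
  "(\<And>x. x \<in> A \<Longrightarrow> f x \<le> g x) \<Longrightarrow> (\<Sum>\<^sub>\<infinity>x\<in>A. (f x :: ennreal)) \<le> (\<Sum>\<^sub>\<infinity>x\<in>A. g x)"
  by (rule infsum_mono) simp_all

lemma infsum_mono_set_ennreal: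
  "A \<subseteq> B \<Longrightarrow> (\<Sum>\<^sub>\<infinity>x\<in>A. (f x :: ennreal)) \<le> (\<Sum>\<^sub>\<infinity>x\<in>B. f x)"
  by (rule infsum_mono_neutral) auto

lemma infsum_Sigma_finite_ennreal:
  assumes "finite F"
  shows "(\<Sum>\<^sub>\<infinity>p\<in>Sigma F B. (f p :: ennreal)) = (\<Sum>x\<in>F. \<Sum>\<^sub>\<infinity>y\<in>B x. f (x, y))"
  using assms
proof (induction F rule: finite_induct)
  case empty
  then show ?case by simp
next
  case (insert x F)
  have split: "Sigma (insert x F) B = Pair x ` B x \<union> Sigma F B"
    and disjoint: "Pair x ` B x \<inter> Sigma F B = {}"
    using insert by auto
  have "(\<Sum>\<^sub>\<infinity>p\<in>Pair x ` B x. f p) = (\<Sum>\<^sub>\<infinity>y\<in>B x. f (x, y))"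
    by (subst infsum_reindex) (auto simp: inj_on_def o_def)
  then show ?case
    using insert by (simp add: split infsum_Un_disjoint[OF ennreal_summable_on ennreal_summable_on disjoint])
qed

lemma infsum_Sigma_ennreal:
  "(\<Sum>\<^sub>\<infinity>p\<in>Sigma A B. (f p :: ennreal)) = (\<Sum>\<^sub>\<infinity>x\<in>A. \<Sum>\<^sub>\<infinity>y\<in>B x. f (x, y))"
proof (rule antisym)
  show "(\<Sum>\<^sub>\<infinity>p\<in>Sigma A B. f p) \<le> (\<Sum>\<^sub>\<infinity>x\<in>A. \<Sum>\<^sub>\<infinity>y\<in>B x. f (x, y))"
  proof (rule infsum_le_finite_sums[OF ennreal_summable_on])
    fix G assume G: "finite G" "G \<subseteq> Sigma A B"
    have "sum f G = (\<Sum>\<^sub>\<infinity>p\<in>G. f p)"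
      using G by simp
    also have "\<dots> \<le> (\<Sum>\<^sub>\<infinity>p\<in>Sigma (fst ` G) B. f p)"
      using G by (intro infsum_mono_set_ennreal) force
    also have "\<dots> = (\<Sum>x\<in>fst ` G. \<Sum>\<^sub>\<infinity>y\<in>B x. f (x, y))"
      using G by (intro infsum_Sigma_finite_ennreal) simp
    also have "\<dots> \<le> (\<Sum>\<^sub>\<infinity>x\<in>A. \<Sum>\<^sub>\<infinity>y\<in>B x. f (x, y))"
      using G infsum_mono_set_ennreal[of "fst ` G" A] by force
    finally show "sum f G \<le> (\<Sum>\<^sub>\<infinity>x\<in>A. \<Sum>\<^sub>\<infinity>y\<in>B x. f (x, y))" .
  qed
next
  show "(\<Sum>\<^sub>\<infinity>x\<in>A. \<Sum>\<^sub>\<infinity>y\<in>B x. f (x, y)) \<le> (\<Sum>\<^sub>\<infinity>p\<in>Sigma A B. f p)"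
  proof (rule infsum_le_finite_sums[OF ennreal_summable_on])
    fix F assume F: "finite F" "F \<subseteq> A"
    have "(\<Sum>x\<in>F. \<Sum>\<^sub>\<infinity>y\<in>B x. f (x, y)) = (\<Sum>\<^sub>\<infinity>p\<in>Sigma F B. f p)"
      using F by (simp add: infsum_Sigma_finite_ennreal)
    also have "\<dots> \<le> (\<Sum>\<^sub>\<infinity>p\<in>Sigma A B. f p)"
      using F by (intro infsum_mono_set_ennreal) auto
    finally show "(\<Sum>x\<in>F. \<Sum>\<^sub>\<infinity>y\<in>B x. f (x, y)) \<le> (\<Sum>\<^sub>\<infinity>p\<in>Sigma A B. f p)" .
  qed
qed

lemma infsum_swap_ennreal:
  "(\<Sum>\<^sub>\<infinity>x\<in>A. \<Sum>\<^sub>\<infinity>y\<in>B. (f x y :: ennreal)) = (\<Sum>\<^sub>\<infinity>y\<in>B. \<Sum>\<^sub>\<infinity>x\<in>A. f x y)"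
proof -
  have "(\<Sum>\<^sub>\<infinity>x\<in>A. \<Sum>\<^sub>\<infinity>y\<in>B. f x y) = (\<Sum>\<^sub>\<infinity>(x, y)\<in>A \<times> B. f x y)"
    by (simp add: infsum_Sigma_ennreal)
  also have "\<dots> = (\<Sum>\<^sub>\<infinity>(y, x)\<in>B \<times> A. f x y)"
    by (subst product_swap[symmetric], subst infsum_reindex) (auto simp: o_def)
  also have "\<dots> = (\<Sum>\<^sub>\<infinity>y\<in>B. \<Sum>\<^sub>\<infinity>x\<in>A. f x y)"
    by (simp add: infsum_Sigma_ennreal)
  finally show ?thesis .
qed

lemma infsum_if_eq_ennreal:
  "(\<Sum>\<^sub>\<infinity>z\<in>A. if z = x then (g z :: ennreal) else 0) = (if x \<in> A then g x else 0)"
proof -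
  have "(\<Sum>\<^sub>\<infinity>z\<in>A. if z = x then g z else 0) = (\<Sum>\<^sub>\<infinity>z\<in>A \<inter> {x}. g z)"
    by (rule infsum_cong_neutral) auto
  then show ?thesis
    by (cases "x \<in> A") auto
qed

lemma suminf_eq_infsum_ennreal: "(\<Sum>n. (f n :: ennreal)) = (\<Sum>\<^sub>\<infinity>n. f n)"
proof (rule antisym)
  show "(\<Sum>n. f n) \<le> (\<Sum>\<^sub>\<infinity>n. f n)"
    unfolding suminf_eq_SUP
    using infsum_mono_set_ennreal[of "{..<_}" UNIV f] by (intro SUP_least) simp
next
  show "(\<Sum>\<^sub>\<infinity>n. f n) \<le> (\<Sum>n. f n)"
  proof (rule infsum_le_finite_sums[OF ennreal_summable_on])
    fix F :: "nat set" assume "finite F"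
    then obtain m where "F \<subseteq> {..<m}"
      by (meson finite_nat_iff_bounded)
    then have "sum f F \<le> sum f {..<m}"
      by (intro sum_mono2) auto
    also have "\<dots> \<le> (\<Sum>n. f n)"
      by (rule sum_le_suminf) auto
    finally show "sum f F \<le> (\<Sum>n. f n)" .
  qed
qed

lemma ennreal_infsum:
  fixes f :: "'b \<Rightarrow> real"
  assumes "f summable_on A" and "\<And>x. x \<in> A \<Longrightarrow> f x \<ge> 0"
  shows "ennreal (infsum f A) = (\<Sum>\<^sub>\<infinity>x\<in>A. ennreal (f x))"
proof -
  have "sum (ennreal \<circ> f) F = ennreal (sum f F)" if "finite F" "F \<subseteq> A" for F
    using that assms(2) by (auto intro: sum_ennreal)
  then have "infsum (ennreal \<circ> f) A = ennreal (infsum f A)"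
    by (simp add: infsum_comm_additive_general assms(1))
  then show ?thesis
    by (simp add: o_def)
qed

lemma summable_on_if_infsum_ennreal_finite:
  fixes f :: "'b \<Rightarrow> real"
  assumes nonneg: "\<And>x. x \<in> A \<Longrightarrow> f x \<ge> 0" and finite: "(\<Sum>\<^sub>\<infinity>x\<in>A. ennreal (f x)) < top"
  shows "f summable_on A"
proof (rule nonneg_bdd_above_summable_on[OF nonneg])
  show "bdd_above (sum f ` {F. F \<subseteq> A \<and> finite F})"
  proof (rule bdd_aboveI2)
    fix F assume F: "F \<in> {F. F \<subseteq> A \<and> finite F}"
    have "ennreal (sum f F) = (\<Sum>\<^sub>\<infinity>x\<in>F. ennreal (f x))"
      using F nonneg by (auto intro!: sum_ennreal[symmetric])
    also have "\<dots> \<le> (\<Sum>\<^sub>\<infinity>x\<in>A. ennreal (f x))"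
      using F by (intro infsum_mono_set_ennreal) auto
    finally have "enn2real (ennreal (sum f F)) \<le> enn2real (\<Sum>\<^sub>\<infinity>x\<in>A. ennreal (f x))"
      using finite by (intro enn2real_mono) auto
    then show "sum f F \<le> enn2real (\<Sum>\<^sub>\<infinity>x\<in>A. ennreal (f x))"
      using F nonneg by (simp add: sum_nonneg subset_iff)
  qed
qed

lemma ennreal_infsum_if_finite:
  fixes f :: "'b \<Rightarrow> real"
  assumes "\<And>x. x \<in> A \<Longrightarrow> f x \<ge> 0" and "(\<Sum>\<^sub>\<infinity>x\<in>A. ennreal (f x)) < top"
  shows "ennreal (infsum f A) = (\<Sum>\<^sub>\<infinity>x\<in>A. ennreal (f x))"
  using assms by (intro ennreal_infsum summable_on_if_infsum_ennreal_finite)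


section \<open>The random walk\<close>

locale walk =
  fixes E :: "'a \<Rightarrow> 'a \<Rightarrow> bool" and mu :: "'a \<Rightarrow> 'a \<Rightarrow> real"
  assumes conductance: "conductance E mu"
begin

lemma mu_sym: "mu x y = mu y x"
  using conductance by (auto simp: conductance_def)

lemma mu_pos: "E x y \<Longrightarrow> mu x y > 0"
  using conductance by (auto simp: conductance_def)

lemma mu_nonneg: "mu x y \<ge> 0"
  using conductance unfolding conductance_def by (metis less_eq_real_def order_refl)

lemma mu_summable: "(\<lambda>y. mu x y) summable_on {y. E x y}"
  using conductance by (auto simp: conductance_def)

lemma vweight_nonneg: "vweight E mu x \<ge> 0"
  unfolding vweight_def by (rule infsum_nonneg) (rule mu_nonneg)

lemma mu_le_vweight: "E x y \<Longrightarrow> mu x y \<le> vweight E mu x"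
  unfolding vweight_def
  using infsum_mono2[OF summable_on_subset[OF mu_summable] mu_summable, of "{y}" x]
  by (simp add: mu_nonneg)

lemma vweight_pos: "E x y \<Longrightarrow> vweight E mu x > 0"
  using mu_le_vweight mu_pos by (meson less_le_trans)

lemma ptrans_nonneg: "ptrans E mu x y \<ge> 0"
  unfolding ptrans_def using mu_nonneg vweight_nonneg by auto

text \<open>Kernels are handled in \<open>ennreal\<close>, where infinite sums always exist and can be interchanged.\<close>

abbreviation P where "P n x y \<equiv> ennreal (pn E mu n x y)"
abbreviation p where "p x y \<equiv> ennreal (ptrans E mu x y)"
abbreviation W where "W x \<equiv> ennreal (vweight E mu x)"

lemma vweight_mult_ptrans: "W x * p x y = ennreal (mu x y)"
proof (cases "E x y")
  case True
  then show ?thesis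
    using vweight_pos[OF True] ptrans_nonneg vweight_nonneg
    by (simp add: ennreal_mult'[symmetric] ptrans_def)
next
  case False
  then show ?thesis
    using conductance by (simp add: ptrans_def conductance_def)
qed

lemma ptrans_row_le_1: "(\<Sum>\<^sub>\<infinity>z. p x z) \<le> 1"
proof -
  let ?v = "vweight E mu x"
  have "(\<Sum>\<^sub>\<infinity>z. p x z) = (\<Sum>\<^sub>\<infinity>z\<in>{z. E x z}. ennreal (mu x z * inverse ?v))"
    by (rule infsum_cong_neutral) (auto simp: ptrans_def divide_inverse)
  also have "\<dots> = ennreal (\<Sum>\<^sub>\<infinity>z\<in>{z. E x z}. mu x z * inverse ?v)"
    by (rule ennreal_infsum[symmetric, OF summable_on_cmult_left[OF mu_summable]])
      (simp add: mu_nonneg vweight_nonneg)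
  also have "(\<Sum>\<^sub>\<infinity>z\<in>{z. E x z}. mu x z * inverse ?v) = ?v * inverse ?v"
    by (simp add: infsum_cmult_left' vweight_def)
  also have "ennreal (?v * inverse ?v) \<le> 1"
    by (cases "?v = 0") auto
  finally show ?thesis .
qed

declare pn.simps(2) [simp del]

text \<open>The real sum defining \<open>pn\<close> is \<open>0\<close> unless summable; the bound \<open>0 \<le> pn \<le> 1\<close> at the previous step
  provides summability, so the recursion is transferred to \<open>ennreal\<close> inside an induction.\<close>

lemma P_Suc_if_bounded:
  assumes "\<And>z. 0 \<le> pn E mu n z y \<and> pn E mu n z y \<le> 1"
  shows "P (Suc n) x y = (\<Sum>\<^sub>\<infinity>z. p x z * P n z y)" and "(\<Sum>\<^sub>\<infinity>z. p x z * P n z y) \<le> 1"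
proof -
  have "(\<Sum>\<^sub>\<infinity>z. p x z * P n z y) \<le> (\<Sum>\<^sub>\<infinity>z. p x z)"
    by (rule infsum_mono_ennreal) (use assms in \<open>auto intro: mult_left_le\<close>)
  also have "\<dots> \<le> 1"
    by (rule ptrans_row_le_1)
  finally show le: "(\<Sum>\<^sub>\<infinity>z. p x z * P n z y) \<le> 1" .
  have eq: "(\<Sum>\<^sub>\<infinity>z. p x z * P n z y) = (\<Sum>\<^sub>\<infinity>z. ennreal (ptrans E mu x z * pn E mu n z y))"
    using assms ptrans_nonneg by (simp add: ennreal_mult')
  have "(\<Sum>\<^sub>\<infinity>z. ennreal (ptrans E mu x z * pn E mu n z y)) < top"
    using le eq order.strict_trans1[OF _ ennreal_one_less_top] by metis
  then have "P (Suc n) x y = (\<Sum>\<^sub>\<infinity>z. ennreal (ptrans E mu x z * pn E mu n z y))"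
    unfolding pn.simps(2) by (rule ennreal_infsum_if_finite[rotated]) (use assms ptrans_nonneg in auto)
  with eq show "P (Suc n) x y = (\<Sum>\<^sub>\<infinity>z. p x z * P n z y)"
    by simp
qed

lemma pn_bounds: "0 \<le> pn E mu n x y \<and> pn E mu n x y \<le> 1"
proof (induction n arbitrary: x y)
  case 0
  then show ?case by simp
next
  case (Suc n)
  have "P (Suc n) x y \<le> 1"
    using P_Suc_if_bounded[OF Suc] by simp
  moreover have "pn E mu (Suc n) x y \<ge> 0"
    unfolding pn.simps(2) by (rule infsum_nonneg) (use Suc ptrans_nonneg in auto)
  ultimately show ?case
    by (simp add: ennreal_le_1)
qed

lemma P_Suc: "P (Suc n) x y = (\<Sum>\<^sub>\<infinity>z. p x z * P n z y)"
  using P_Suc_if_bounded(1)[OF pn_bounds] .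

lemma P_le_1: "P n x y \<le> 1"
  using pn_bounds by (simp add: ennreal_le_1)

lemma P_add: "P (n + m) x y = (\<Sum>\<^sub>\<infinity>z. P n x z * P m z y)"
proof (induction n arbitrary: x)
  case 0
  have "(\<Sum>\<^sub>\<infinity>z. P 0 x z * P m z y) = (\<Sum>\<^sub>\<infinity>z. if z = x then P m z y else 0)"
    by (rule infsum_cong) auto
  then show ?case
    by (simp add: infsum_if_eq_ennreal)
next
  case (Suc n)
  have "P (Suc n + m) x y = (\<Sum>\<^sub>\<infinity>w. \<Sum>\<^sub>\<infinity>z. p x w * (P n w z * P m z y))"
    by (simp add: P_Suc Suc infsum_cmult_left_ennreal)
  also have "\<dots> = (\<Sum>\<^sub>\<infinity>z. \<Sum>\<^sub>\<infinity>w. p x w * (P n w z * P m z y))"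
    by (rule infsum_swap_ennreal)
  also have "\<dots> = (\<Sum>\<^sub>\<infinity>z. P (Suc n) x z * P m z y)"
    by (simp only: P_Suc infsum_cmult_right_ennreal[symmetric] mult.assoc)
  finally show ?case .
qed

lemma P_Suc_right: "P (Suc n) x y = (\<Sum>\<^sub>\<infinity>z. P n x z * p z y)"
proof -
  have "P 1 z y = p z y" for z
  proof -
    have "P 1 z y = (\<Sum>\<^sub>\<infinity>w. if w = y then p z w else 0)"
      by (simp only: One_nat_def P_Suc) (rule infsum_cong, auto)
    then show ?thesis
      by (simp add: infsum_if_eq_ennreal)
  qed
  then show ?thesis
    using P_add[of n 1 x y] by simp
qed

lemma P_row_le_1: "(\<Sum>\<^sub>\<infinity>y. P n x y) \<le> 1"
proof (induction n arbitrary: x)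
  case 0
  have "(\<Sum>\<^sub>\<infinity>y. P 0 x y) = (\<Sum>\<^sub>\<infinity>y. if y = x then 1 else 0)"
    by (rule infsum_cong) auto
  then show ?case
    by (simp add: infsum_if_eq_ennreal)
next
  case (Suc n)
  have "(\<Sum>\<^sub>\<infinity>y. P (Suc n) x y) = (\<Sum>\<^sub>\<infinity>y. \<Sum>\<^sub>\<infinity>z. p x z * P n z y)"
    by (simp only: P_Suc)
  also have "\<dots> = (\<Sum>\<^sub>\<infinity>z. \<Sum>\<^sub>\<infinity>y. p x z * P n z y)"
    by (rule infsum_swap_ennreal)
  also have "\<dots> = (\<Sum>\<^sub>\<infinity>z. p x z * (\<Sum>\<^sub>\<infinity>y. P n z y))"
    by (simp add: infsum_cmult_left_ennreal)
  also have "\<dots> \<le> (\<Sum>\<^sub>\<infinity>z. p x z)"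
    by (rule infsum_mono_ennreal) (use Suc in \<open>auto intro: mult_left_le\<close>)
  also have "\<dots> \<le> 1"
    by (rule ptrans_row_le_1)
  finally show ?case .
qed

lemma P_reversible: "W x * P n x y = W y * P n y x"
proof (induction n arbitrary: x y)
  case 0
  then show ?case by simp
next
  case (Suc n)
  have "W x * P (Suc n) x y = (\<Sum>\<^sub>\<infinity>z. ennreal (mu x z) * P n z y)"
    by (simp add: P_Suc infsum_cmult_left_ennreal[symmetric] mult.assoc[symmetric] vweight_mult_ptrans)
  also have "\<dots> = (\<Sum>\<^sub>\<infinity>z. (W z * P n z y) * p z x)"
    by (rule infsum_cong) (metis vweight_mult_ptrans mu_sym mult.commute mult.left_commute)
  also have "\<dots> = (\<Sum>\<^sub>\<infinity>z. W y * P n y z * p z x)"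
    by (intro infsum_cong) (subst Suc, rule refl)
  also have "\<dots> = W y * P (Suc n) y x"
    by (simp add: P_Suc_right infsum_cmult_left_ennreal mult.assoc)
  finally show ?case .
qed

lemma pn_reversible: "vweight E mu x * pn E mu n x y = vweight E mu y * pn E mu n y x"
  using P_reversible[of x n y] vweight_nonneg pn_bounds
  by (simp add: ennreal_mult'[symmetric])

end


section \<open>The walk killed on leaving a set\<close>

context walk
begin

abbreviation Q where "Q B n x y \<equiv> ennreal (qk E mu B n x y)"

declare qk.simps(2) [simp del]

lemma Q_Suc_if_bounded:
  assumes "\<And>z. 0 \<le> qk E mu B n x z \<and> qk E mu B n x z \<le> pn E mu n x z"
  shows "Q B (Suc n) x y = (if y \<in> B then (\<Sum>\<^sub>\<infinity>z. Q B n x z * p z y) else 0)"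
    and "(\<Sum>\<^sub>\<infinity>z. Q B n x z * p z y) \<le> P (Suc n) x y"
proof -
  have "(\<Sum>\<^sub>\<infinity>z. Q B n x z * p z y) \<le> (\<Sum>\<^sub>\<infinity>z. P n x z * p z y)"
    using assms by (intro infsum_mono_ennreal mult_right_mono ennreal_leI) auto
  also have "\<dots> = P (Suc n) x y"
    by (simp add: P_Suc_right)
  finally show le: "(\<Sum>\<^sub>\<infinity>z. Q B n x z * p z y) \<le> P (Suc n) x y" .
  have eq: "(\<Sum>\<^sub>\<infinity>z. Q B n x z * p z y) = (\<Sum>\<^sub>\<infinity>z. ennreal (qk E mu B n x z * ptrans E mu z y))"
    using assms ptrans_nonneg by (simp add: ennreal_mult')
  have finite: "(\<Sum>\<^sub>\<infinity>z. ennreal (qk E mu B n x z * ptrans E mu z y)) < top"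
    using le eq P_le_1[of "Suc n" x y] ennreal_one_less_top by (metis order.trans order.strict_trans1)
  have nonneg: "0 \<le> qk E mu B n x z * ptrans E mu z y" for z
    using assms ptrans_nonneg by simp
  have "y \<in> B \<Longrightarrow> Q B (Suc n) x y = (\<Sum>\<^sub>\<infinity>z. ennreal (qk E mu B n x z * ptrans E mu z y))"
    unfolding qk.simps(2) using ennreal_infsum_if_finite[OF nonneg finite] by simp
  with eq show "Q B (Suc n) x y = (if y \<in> B then (\<Sum>\<^sub>\<infinity>z. Q B n x z * p z y) else 0)"
    by (simp add: qk.simps(2))
qed

lemma qk_bounds: "0 \<le> qk E mu B n x y \<and> qk E mu B n x y \<le> pn E mu n x y"
proof (induction n arbitrary: y)
  case 0
  then show ?case by simp
next
  case (Suc n)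
  have "Q B (Suc n) x y \<le> P (Suc n) x y"
    using Q_Suc_if_bounded[of B n x y, OF Suc] by simp
  moreover have "qk E mu B (Suc n) x y \<ge> 0"
    unfolding qk.simps(2) by (auto intro!: infsum_nonneg mult_nonneg_nonneg ptrans_nonneg simp: Suc)
  ultimately show ?case
    using pn_bounds[of "Suc n" x y] by simp
qed

lemma Q_Suc: "Q B (Suc n) x y = (if y \<in> B then (\<Sum>\<^sub>\<infinity>z. Q B n x z * p z y) else 0)"
  using Q_Suc_if_bounded(1)[OF qk_bounds] .

lemma Q_le_P: "Q B n x y \<le> P n x y"
  using qk_bounds by (auto intro: ennreal_leI)

lemma Q_outside: "y \<notin> B \<Longrightarrow> Q B n x y = 0"
  by (cases n) (auto simp: Q_Suc)

lemma Q_mono: "B \<subseteq> B' \<Longrightarrow> Q B n x y \<le> Q B' n x y"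
proof (induction n arbitrary: y)
  case 0
  then show ?case by auto
next
  case (Suc n)
  have "(\<Sum>\<^sub>\<infinity>z. Q B n x z * p z y) \<le> (\<Sum>\<^sub>\<infinity>z. Q B' n x z * p z y)"
    using Suc by (intro infsum_mono_ennreal mult_right_mono) auto
  then show ?case
    using Suc.prems by (auto simp: Q_Suc)
qed

lemma Q_add: "Q B (n + m) x y = (\<Sum>\<^sub>\<infinity>z. Q B n x z * Q B m z y)"
proof (induction m arbitrary: y)
  case 0
  have "(\<Sum>\<^sub>\<infinity>z. Q B n x z * Q B 0 z y) = (\<Sum>\<^sub>\<infinity>z. if z = y then (if y \<in> B then Q B n x z else 0) else 0)"
    by (rule infsum_cong) auto
  then show ?case
    by (simp add: infsum_if_eq_ennreal Q_outside)
next
  case (Suc m)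
  show ?case
  proof (cases "y \<in> B")
    case True
    have "Q B (n + Suc m) x y = (\<Sum>\<^sub>\<infinity>w. \<Sum>\<^sub>\<infinity>z. Q B n x z * (Q B m z w * p w y))"
      using True by (simp only: add_Suc_right Q_Suc Suc if_True infsum_cmult_right_ennreal[symmetric] mult.assoc)
    also have "\<dots> = (\<Sum>\<^sub>\<infinity>z. \<Sum>\<^sub>\<infinity>w. Q B n x z * (Q B m z w * p w y))"
      by (rule infsum_swap_ennreal)
    also have "\<dots> = (\<Sum>\<^sub>\<infinity>z. Q B n x z * Q B (Suc m) z y)"
      using True by (simp add: Q_Suc infsum_cmult_left_ennreal)
    finally show ?thesis .
  next
    case False
    then show ?thesis by (simp add: Q_outside)
  qed
qed

text \<open>\<open>surv B n x\<close> is \<open>P\<^sup>x(\<tau>\<^sub>B > n)\<close> and \<open>mean_exit B x\<close> is \<open>E\<^sup>x[\<tau>\<^sub>B]\<close>, where \<open>\<tau>\<^sub>B\<close> is the exit time from \<open>B\<close>.\<close>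

definition surv where "surv B n x = (\<Sum>\<^sub>\<infinity>y. Q B n x y)"

definition mean_exit where "mean_exit B x = (\<Sum>\<^sub>\<infinity>n. surv B n x)"

lemma surv_le_1: "surv B n x \<le> 1"
  unfolding surv_def
  using infsum_mono_ennreal[OF Q_le_P] P_row_le_1 by (rule order.trans)

lemma exit_time_eq_mean_exit: "exit_time E mu d x r = mean_exit (dball d x r) x"
proof -
  have "ennreal (\<Sum>\<^sub>\<infinity>y. qk E mu (dball d x r) n x y) = surv (dball d x r) n x" for n
    unfolding surv_def
    using qk_bounds order.strict_trans1[OF surv_le_1[unfolded surv_def] ennreal_one_less_top]
    by (intro ennreal_infsum_if_finite) auto
  then show ?thesis
    unfolding exit_time_def mean_exit_def by (simp add: suminf_eq_infsum_ennreal)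
qed

lemma mean_exit_mono: "B \<subseteq> B' \<Longrightarrow> mean_exit B x \<le> mean_exit B' x"
  unfolding mean_exit_def surv_def by (intro infsum_mono_ennreal Q_mono)

lemma surv_add: "surv B (n + m) x = (\<Sum>\<^sub>\<infinity>z. Q B n x z * surv B m z)"
proof -
  have "surv B (n + m) x = (\<Sum>\<^sub>\<infinity>y. \<Sum>\<^sub>\<infinity>z. Q B n x z * Q B m z y)"
    by (simp add: surv_def Q_add)
  also have "\<dots> = (\<Sum>\<^sub>\<infinity>z. \<Sum>\<^sub>\<infinity>y. Q B n x z * Q B m z y)"
    by (rule infsum_swap_ennreal)
  also have "\<dots> = (\<Sum>\<^sub>\<infinity>z. Q B n x z * surv B m z)"
    by (simp add: surv_def infsum_cmult_left_ennreal)
  finally show ?thesis .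
qed

lemma mean_exit_le:
  assumes "\<And>z. z \<in> B \<Longrightarrow> mean_exit B z \<le> S"
  shows "mean_exit B x \<le> of_nat n + surv B n x * S"
proof -
  have "(UNIV :: nat set) = {..<n} \<union> (\<lambda>m. n + m) ` UNIV"
    by (auto simp: image_iff) (metis le_add_diff_inverse not_less)
  then have "mean_exit B x = (\<Sum>\<^sub>\<infinity>k\<in>{..<n}. surv B k x) + (\<Sum>\<^sub>\<infinity>k\<in>(\<lambda>m. n + m) ` UNIV. surv B k x)"
    unfolding mean_exit_def by (metis infsum_Un_disjoint ennreal_summable_on lessThan_iff
        disjoint_iff image_iff le_add1 not_le)
  then have "mean_exit B x = (\<Sum>k<n. surv B k x) + (\<Sum>\<^sub>\<infinity>m. surv B (n + m) x)"
    by (simp add: infsum_reindex o_def)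
  also have "(\<Sum>k<n. surv B k x) \<le> of_nat n"
    using sum_bounded_above[of "{..<n}" "\<lambda>k. surv B k x" 1] surv_le_1 by simp
  also have "(\<Sum>\<^sub>\<infinity>m. surv B (n + m) x) = (\<Sum>\<^sub>\<infinity>z. Q B n x z * mean_exit B z)"
    \<comment> \<open>Markov property at time \<open>n\<close>\<close>
    unfolding surv_add mean_exit_def
    by (subst infsum_swap_ennreal) (simp add: infsum_cmult_left_ennreal)
  also have "\<dots> \<le> (\<Sum>\<^sub>\<infinity>z. Q B n x z * S)"
    using assms by (intro infsum_mono_ennreal) (metis Q_outside mult_left_mono mult_zero_left zero_le)
  also have "\<dots> = surv B n x * S"
    by (simp add: surv_def infsum_cmult_right_ennreal)
  finally show ?thesis
    by (simp add: add_right_mono)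
qed

end


section \<open>Lower bounds for the on-diagonal heat kernel\<close>

lemma dball_subset_dball_double:
  assumes "is_metric d" and "z \<in> dball d x R"
  shows "dball d x R \<subseteq> dball d z (2 * R)"
proof
  fix w assume "w \<in> dball d x R"
  moreover have "d z w \<le> d x z + d x w"
    using assms(1) unfolding is_metric_def by metis
  ultimately show "w \<in> dball d z (2 * R)"
    using assms(2) by (simp add: dball_def)
qed

lemma root_scaled_powr_ge:
  assumes "\<beta> > 0" "c > 0" "M \<ge> (2 / c) powr (1 / \<beta>)"
  shows "2 * real n \<le> c * (M * real n powr (1 / \<beta>)) powr \<beta>"
proof -
  have "(2 / c) powr (1 / \<beta>) > 0"
    using assms(2) by simp
  with assms(3) have "M > 0"
    by linarith
  have "2 / c = ((2 / c) powr (1 / \<beta>)) powr \<beta>"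
    using assms(1,2) by (simp add: powr_powr)
  also have "\<dots> \<le> M powr \<beta>"
    using assms by (intro powr_mono2) auto
  finally have "2 \<le> c * M powr \<beta>"
    using assms(2) by (simp add: field_simps)
  then have "2 * real n \<le> c * M powr \<beta> * real n"
    by (intro mult_right_mono) auto
  also have "\<dots> = c * (M * real n powr (1 / \<beta>)) powr \<beta>"
    using \<open>M > 0\<close> assms(1) by (simp add: powr_mult powr_powr)
  finally show ?thesis .
qed

context walk
begin

lemma surv_ge_of_mean_exit_bounds:
  assumes lower: "ennreal a \<le> mean_exit B x"
    and upper: "\<And>z. z \<in> B \<Longrightarrow> mean_exit B z \<le> ennreal S" and "S > 0"
  shows "ennreal ((a - real n) / S) \<le> surv B n x"
proof -
  have "surv B n x < top"
    using surv_le_1 ennreal_one_less_top by (rule order.strict_trans1)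
  then obtain s where s: "surv B n x = ennreal s" "s \<ge> 0"
    by (metis ennreal_enn2real enn2real_nonneg less_top)
  have "of_nat n + surv B n x * ennreal S = ennreal (real n + s * S)"
    using s \<open>S > 0\<close> by (simp add: ennreal_plus ennreal_mult ennreal_of_nat_eq_real_of_nat)
  then have "ennreal a \<le> ennreal (real n + s * S)"
    using order.trans[OF lower mean_exit_le[OF upper, of x n]] by simp
  then have "a \<le> real n + s * S"
    using s \<open>S > 0\<close> by (subst (asm) ennreal_le_iff) auto
  then have "(a - real n) / S \<le> s"
    using \<open>S > 0\<close> by (simp add: pos_divide_le_eq)
  with s show ?thesis
    by (simp add: ennreal_leI)
qed

lemma surv_lower_bound:
  assumes "is_metric d" and "c1 > 0" "c2 > 0" "R > 0"
    and lower: "ennreal (c1 * R powr \<beta>) \<le> exit_time E mu d x R"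
    and upper: "\<And>z. exit_time E mu d z (2 * R) \<le> ennreal (c2 * (2 * R) powr \<beta>)"
    and n: "2 * real n \<le> c1 * R powr \<beta>"
  shows "ennreal (c1 / (2 * c2 * 2 powr \<beta>)) \<le> surv (dball d x R) n x"
proof -
  let ?B = "dball d x R" and ?S = "c2 * (2 * R) powr \<beta>"
  have "mean_exit ?B z \<le> ennreal ?S" if "z \<in> ?B" for z
  proof -
    have "mean_exit ?B z \<le> mean_exit (dball d z (2 * R)) z"
      using dball_subset_dball_double[OF assms(1) that] by (rule mean_exit_mono)
    also have "\<dots> \<le> ennreal ?S"
      using upper by (simp add: exit_time_eq_mean_exit)
    finally show ?thesis .
  qed
  then have "ennreal ((c1 * R powr \<beta> - real n) / ?S) \<le> surv ?B n x"
    using lower \<open>c2 > 0\<close> \<open>R > 0\<close> by (intro surv_ge_of_mean_exit_bounds) (simp_all add: exit_time_eq_mean_exit)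
  moreover have "c1 / (2 * c2 * 2 powr \<beta>) = (c1 * R powr \<beta> / 2) / ?S"
    using \<open>R > 0\<close> \<open>c2 > 0\<close> by (simp add: powr_mult field_simps)
  moreover have "\<dots> \<le> (c1 * R powr \<beta> - real n) / ?S"
    using n \<open>c2 > 0\<close> by (intro divide_right_mono) auto
  ultimately show ?thesis
    by (metis ennreal_leI order.trans)
qed

text \<open>Survival for one step forces \<open>x\<close> to have a neighbour; by connectivity every vertex then has one.\<close>

lemma vweight_pos_if_surv_pos:
  assumes "connected_graph E" and "0 < surv B (Suc m) x"
  shows "vweight E mu w > 0"
proof -
  obtain y where "0 < Q B (Suc m) x y"
    using assms(2) unfolding surv_def by (metis infsum_0 not_gr_zero)
  then have "0 < P (Suc m) x y"
    using Q_le_P by (rule less_le_trans)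
  have "vweight E mu x \<noteq> 0"
  proof
    assume "vweight E mu x = 0"
    then have "p x z = 0" for z
      by (simp add: ptrans_def)
    then have "P (Suc m) x y = 0"
      by (simp add: P_Suc)
    with \<open>0 < P (Suc m) x y\<close> show False
      by simp
  qed
  then obtain z where "E x z"
    unfolding vweight_def by (metis (no_types, lifting) Collect_empty_eq infsum_empty)
  show ?thesis
  proof (cases "w = x")
    case True
    with \<open>E x z\<close> show ?thesis
      by (simp add: vweight_pos)
  next
    case False
    with assms(1) obtain v where "E w v"
      unfolding connected_graph_def by (metis converse_rtranclpE)
    then show ?thesis
      by (rule vweight_pos)
  qed
qed

lemma surv_gt_imp_finite_mass:
  assumes "ennreal e < surv B n x"
  obtains F where "finite F" "F \<subseteq> B" "e < (\<Sum>y\<in>F. pn E mu n x y)"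
proof -
  note assms
  also have "surv B n x = (\<Sum>\<^sub>\<infinity>y\<in>B. Q B n x y)"
    unfolding surv_def by (rule infsum_cong_neutral) (auto simp: Q_outside)
  also have "\<dots> \<le> (\<Sum>\<^sub>\<infinity>y\<in>B. P n x y)"
    by (intro infsum_mono_ennreal Q_le_P)
  also have "\<dots> = (SUP F\<in>{F. finite F \<and> F \<subseteq> B}. \<Sum>y\<in>F. P n x y)"
    by (rule nonneg_infsum_complete) simp
  finally obtain F where F: "finite F" "F \<subseteq> B" and "ennreal e < (\<Sum>y\<in>F. P n x y)"
    by (auto simp: less_SUP_iff)
  then have "ennreal e < ennreal (\<Sum>y\<in>F. pn E mu n x y)"
    using pn_bounds by (simp add: sum_ennreal)
  with F that show ?thesis
    by (meson ennreal_leI not_le)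
qed

lemma hn_diag_ge_mass_squared:
  assumes F: "finite F" and pos: "\<And>y. vweight E mu y > 0"
  shows "(\<Sum>y\<in>F. pn E mu n x y)\<^sup>2 / (\<Sum>y\<in>F. vweight E mu y) \<le> hn E mu (2 * n) x x"
proof -
  let ?v = "vweight E mu" and ?p = "pn E mu n"
  have "ennreal (\<Sum>y\<in>F. ?p x y * ?p y x) = (\<Sum>\<^sub>\<infinity>y\<in>F. P n x y * P n y x)"
    using F pn_bounds by (simp add: ennreal_mult' sum_ennreal[symmetric])
  also have "\<dots> \<le> (\<Sum>\<^sub>\<infinity>y. P n x y * P n y x)"
    by (rule infsum_mono_set_ennreal) simp
  also have "\<dots> = P (2 * n) x x"
    by (simp add: P_add[symmetric] mult_2)
  finally have "(\<Sum>y\<in>F. ?p x y * ?p y x) \<le> pn E mu (2 * n) x x"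
    using pn_bounds by simp
  moreover have "?p y x = ?v x * ?p x y / ?v y" for y
    using pn_reversible[of x n y] pos[of y] by (simp add: field_simps)
  ultimately have "?v x * (\<Sum>y\<in>F. (?p x y)\<^sup>2 / ?v y) \<le> pn E mu (2 * n) x x"
    by (simp add: sum_distrib_left power2_eq_square mult_ac)
  then have sum_le: "(\<Sum>y\<in>F. (?p x y)\<^sup>2 / ?v y) \<le> hn E mu (2 * n) x x"
    using pos[of x] by (simp add: hn_def field_simps)
  have "(\<Sum>y\<in>F. ?p x y)\<^sup>2 = (\<Sum>y\<in>F. (?p x y / sqrt (?v y)) * sqrt (?v y))\<^sup>2"
    using pos by (intro arg_cong[where f = "\<lambda>t. t\<^sup>2"] sum.cong) (auto simp: less_le)
  also have "\<dots> \<le> (\<Sum>y\<in>F. (?p x y / sqrt (?v y))\<^sup>2) * (\<Sum>y\<in>F. (sqrt (?v y))\<^sup>2)"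
    by (rule Cauchy_Schwarz_ineq_sum)
  also have "\<dots> = (\<Sum>y\<in>F. (?p x y)\<^sup>2 / ?v y) * (\<Sum>y\<in>F. ?v y)"
    using pos by (simp add: power_divide less_imp_le)
  finally have "(\<Sum>y\<in>F. ?p x y)\<^sup>2 / (\<Sum>y\<in>F. ?v y) \<le> (\<Sum>y\<in>F. (?p x y)\<^sup>2 / ?v y)"
    using F pos by (cases "F = {}") (simp_all add: divide_le_eq sum_pos)
  then show ?thesis
    using sum_le by (rule order.trans)
qed

lemma vol_nonneg: "vol E mu d x r \<ge> 0"
  unfolding vol_def by (rule infsum_nonneg) (rule vweight_nonneg)

lemma vol_ge_sum:
  assumes "vweight E mu summable_on dball d x r" and "finite F" "F \<subseteq> dball d x r"
  shows "(\<Sum>y\<in>F. vweight E mu y) \<le> vol E mu d x r"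
proof -
  have "(\<Sum>y\<in>F. vweight E mu y) = infsum (vweight E mu) F"
    using assms(2) by simp
  also have "\<dots> \<le> vol E mu d x r"
    unfolding vol_def by (rule infsum_mono2) (use assms vweight_nonneg in auto)
  finally show ?thesis .
qed

lemma vol_pos:
  assumes "is_metric d" and "vweight E mu summable_on dball d x r" and "r > 0" "vweight E mu x > 0"
  shows "vol E mu d x r > 0"
proof -
  have "d x x = 0"
    using assms(1) by (simp add: is_metric_def)
  with assms(3) have "x \<in> dball d x r"
    by (simp add: dball_def)
  then show ?thesis
    using vol_ge_sum[OF assms(2), of "{x}"] assms(4) by simp
qed

lemma hn_diag_ge_surv_squared:
  assumes pos: "\<And>y. vweight E mu y > 0" and finvol: "vweight E mu summable_on dball d x R"
    and "0 \<le> e" and e: "ennreal e < surv (dball d x R) n x"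
  shows "e\<^sup>2 / vol E mu d x R \<le> hn E mu (2 * n) x x"
proof -
  obtain F where F: "finite F" "F \<subseteq> dball d x R" and mass: "e < (\<Sum>y\<in>F. pn E mu n x y)"
    using e by (rule surv_gt_imp_finite_mass)
  then have "F \<noteq> {}"
    using \<open>0 \<le> e\<close> by auto
  then have vF: "0 < (\<Sum>y\<in>F. vweight E mu y)"
    using F pos by (intro sum_pos) auto
  have "e\<^sup>2 / vol E mu d x R \<le> e\<^sup>2 / (\<Sum>y\<in>F. vweight E mu y)"
    using vF vol_ge_sum[OF finvol F] by (intro divide_left_mono) auto
  also have "\<dots> \<le> (\<Sum>y\<in>F. pn E mu n x y)\<^sup>2 / (\<Sum>y\<in>F. vweight E mu y)"
    using mass \<open>0 \<le> e\<close> vF by (intro divide_right_mono power_mono) auto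
  also have "\<dots> \<le> hn E mu (2 * n) x x"
    by (rule hn_diag_ge_mass_squared[OF F(1) pos])
  finally show ?thesis .
qed

lemma hn_diag_ge_of_exit_time_bounds:
  assumes "is_metric d" and "connected_graph E"
    and finvol: "\<And>x r. vweight E mu summable_on dball d x r"
    and "\<beta> > 0" "r0 > 0" "c1 > 0" "c2 > 0"
    and exit_bounds: "\<forall>x. \<forall>r>r0. ennreal (c1 * r powr \<beta>) \<le> exit_time E mu d x r \<and>
                                 exit_time E mu d x r \<le> ennreal (c2 * r powr \<beta>)"
    and M: "r0 + 1 \<le> M" "(2 / c1) powr (1 / \<beta>) \<le> M"
    and "n \<ge> 1"
  shows "0 < vol E mu d x (M * real n powr (1 / \<beta>))"
    and "(c1 / (4 * c2 * 2 powr \<beta>))\<^sup>2 / vol E mu d x (M * real n powr (1 / \<beta>)) \<le> hn E mu (2 * n) x x"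
proof -
  let ?\<epsilon> = "c1 / (2 * c2 * 2 powr \<beta>)"
  have radius: "r0 < M * real n powr (1 / \<beta>)" if "n \<ge> 1" for n
  proof -
    have "1 \<le> real n powr (1 / \<beta>)"
      using that \<open>\<beta> > 0\<close> by (intro ge_one_powr_ge_zero) auto
    then have "M \<le> M * real n powr (1 / \<beta>)"
      using M(1) \<open>r0 > 0\<close> mult_left_mono[of 1 "real n powr (1 / \<beta>)" M] by simp
    with M(1) show ?thesis
      by linarith
  qed
  have surv_ge: "ennreal ?\<epsilon> \<le> surv (dball d x (M * real n powr (1 / \<beta>))) n x" if "n \<ge> 1" for x n
    using radius[OF that] exit_bounds \<open>r0 > 0\<close>
    by (intro surv_lower_bound[OF \<open>is_metric d\<close> \<open>c1 > 0\<close> \<open>c2 > 0\<close>]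
        root_scaled_powr_ge[OF \<open>\<beta> > 0\<close> \<open>c1 > 0\<close> M(2)]) simp_all
  have "?\<epsilon> > 0"
    using \<open>c1 > 0\<close> \<open>c2 > 0\<close> by simp
  have pos: "vweight E mu w > 0" for w
    using less_le_trans[OF _ surv_ge[where n = 1 and x = w]] \<open>?\<epsilon> > 0\<close>
    by (intro vweight_pos_if_surv_pos[OF \<open>connected_graph E\<close>, of "dball d w M" 0 w]) simp
  show "0 < vol E mu d x (M * real n powr (1 / \<beta>))"
    using radius[OF \<open>n \<ge> 1\<close>] \<open>r0 > 0\<close> by (intro vol_pos[OF \<open>is_metric d\<close> finvol _ pos]) simp
  have "ennreal (?\<epsilon> / 2) < surv (dball d x (M * real n powr (1 / \<beta>))) n x"
    using \<open>?\<epsilon> > 0\<close> less_le_trans[OF ennreal_lessI surv_ge[OF \<open>n \<ge> 1\<close>, of x], of "?\<epsilon> / 2"] by simp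
  then have "(?\<epsilon> / 2)\<^sup>2 / vol E mu d x (M * real n powr (1 / \<beta>)) \<le> hn E mu (2 * n) x x"
    using \<open>?\<epsilon> > 0\<close> by (intro hn_diag_ge_surv_squared[OF pos finvol]) auto
  then show "(c1 / (4 * c2 * 2 powr \<beta>))\<^sup>2 / vol E mu d x (M * real n powr (1 / \<beta>)) \<le> hn E mu (2 * n) x x"
    by (simp add: field_simps)
qed

end


lemma growth_bound_scaled:
  fixes V :: "real \<Rightarrow> real"
  assumes growth: "\<And>r s. 0 < s \<Longrightarrow> s < r \<Longrightarrow> V r \<le> C * (r / s) powr \<alpha> * V s"
    and "V s \<ge> 0" "s > 0" "M \<ge> 1"
  shows "V (M * s) \<le> max 1 (\<bar>C\<bar> * M powr \<bar>\<alpha>\<bar>) * V s"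
proof (cases "M = 1")
  case True
  then show ?thesis
    using mult_right_mono[of 1 "max 1 \<bar>C\<bar>" "V s"] \<open>V s \<ge> 0\<close> by simp
next
  case False
  then have "V (M * s) \<le> C * M powr \<alpha> * V s"
    using growth[of s "M * s"] assms(3,4) by simp
  also have "\<dots> \<le> \<bar>C\<bar> * M powr \<bar>\<alpha>\<bar> * V s"
    using assms(2,4) by (intro mult_right_mono mult_mono powr_mono) auto
  also have "\<dots> \<le> max 1 (\<bar>C\<bar> * M powr \<bar>\<alpha>\<bar>) * V s"
    using assms(2) by (intro mult_right_mono) auto
  finally show ?thesis .
qed

theorem proposition6p3:
  fixes E :: "'a \<Rightarrow> 'a \<Rightarrow> bool" and mu d :: "'a \<Rightarrow> 'a \<Rightarrow> real" and \<alpha> \<beta> :: real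
  assumes "countable (UNIV :: 'a set)"
    and "simple_graph E" and "connected_graph E"
    and "conductance E mu" and "is_metric d"
    and "\<beta> > 0"
    and finvol: "\<And>x r. vweight E mu summable_on dball d x r"
    and Ebeta: "\<exists>r0>0. \<exists>c1>0. \<exists>c2>0. \<forall>x. \<forall>r>r0.
                 ennreal (c1 * r powr \<beta>) \<le> exit_time E mu d x r \<and>
                 exit_time E mu d x r \<le> ennreal (c2 * r powr \<beta>)"
    and VG: "\<exists>C. \<forall>x. \<forall>r s. 0 < s \<and> s < r \<longrightarrow>
                 vol E mu d x r \<le> C * (r / s) powr \<alpha> * vol E mu d x s"
  shows "\<exists>c>0. \<forall>x. \<forall>n::nat. n \<ge> 1 \<longrightarrow>
           hn E mu (2 * n) x x \<ge> c / vol E mu d x (real n powr (1 / \<beta>))"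
proof -
  interpret walk E mu
    using \<open>conductance E mu\<close> by unfold_locales
  obtain r0 c1 c2 where "r0 > 0" "c1 > 0" "c2 > 0" and exit_bounds: "\<forall>x. \<forall>r>r0.
      ennreal (c1 * r powr \<beta>) \<le> exit_time E mu d x r \<and> exit_time E mu d x r \<le> ennreal (c2 * r powr \<beta>)"
    using Ebeta by blast
  obtain C where growth: "\<And>x r s. 0 < s \<Longrightarrow> s < r \<Longrightarrow> vol E mu d x r \<le> C * (r / s) powr \<alpha> * vol E mu d x s"
    using VG by blast
  define M where "M = max (r0 + 1) ((2 / c1) powr (1 / \<beta>))"
  define K where "K = max 1 (\<bar>C\<bar> * M powr \<bar>\<alpha>\<bar>)"
  define c where "c = (c1 / (4 * c2 * 2 powr \<beta>))\<^sup>2"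
  have "M \<ge> 1" "K > 0" "c > 0"
    using \<open>r0 > 0\<close> \<open>c1 > 0\<close> \<open>c2 > 0\<close> by (auto simp: M_def K_def c_def)
  show ?thesis
  proof (intro exI[of _ "c / K"] conjI allI impI)
    fix x and n :: nat
    assume "n \<ge> 1"
    let ?s = "real n powr (1 / \<beta>)"
    have "?s \<ge> 1"
      using \<open>n \<ge> 1\<close> \<open>\<beta> > 0\<close> by (intro ge_one_powr_ge_zero) auto
    then have growth_s: "vol E mu d x (M * ?s) \<le> K * vol E mu d x ?s"
      unfolding K_def using \<open>M \<ge> 1\<close> \<open>n \<ge> 1\<close>
      by (intro growth_bound_scaled[where V = "vol E mu d x"] growth vol_nonneg) auto
    have vol_pos: "0 < vol E mu d x (M * ?s)" and diag: "c / vol E mu d x (M * ?s) \<le> hn E mu (2 * n) x x"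
      using hn_diag_ge_of_exit_time_bounds[OF \<open>is_metric d\<close> \<open>connected_graph E\<close> finvol
          \<open>\<beta> > 0\<close> \<open>r0 > 0\<close> \<open>c1 > 0\<close> \<open>c2 > 0\<close> exit_bounds _ _ \<open>n \<ge> 1\<close>, of M x]
      by (simp_all add: M_def c_def)
    have "c / K / vol E mu d x ?s = c / (K * vol E mu d x ?s)"
      by simp
    also have "\<dots> \<le> c / vol E mu d x (M * ?s)"
      using growth_s \<open>c > 0\<close> mult_pos_pos[OF less_le_trans[OF vol_pos growth_s] vol_pos]
      by (intro divide_left_mono) auto
    also note diag
    finally show "c / K / vol E mu d x ?s \<le> hn E mu (2 * n) x x" .
  qed (use \<open>c > 0\<close> \<open>K > 0\<close> in simp)
qed

end
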